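(* Let $\mathrm{k}$ be an infinite field. For every integer $n\geq4$ and every non-constant polynomial $P\in\mathrm{k}[T]$, the $\mathrm{k}$-algebra $\mathrm{k}[T]/(P^n)$ has infinitely many subalgebras.
   Context: Subalgebras are unital (contain $1$). *)

theory Defs
  imports "HOL-Computational_Algebra.Polynomial"
begin

text \<open>The quotient algebra k[T]/(Q) is modelled by canonical representatives:
  polynomials r with r mod Q = r, with addition and scalar multiplication
  inherited from k[T] and multiplication x * y mod Q.\<close>

definition residues_mod :: "'a::field poly \<Rightarrow> 'a poly set" where
  "residues_mod Q = {r. r mod Q = r}"

definition quot_subalgebra :: "'a::field poly \<Rightarrow> 'a poly set \<Rightarrow> bool" where
  "quot_subalgebra Q S \<longleftrightarrow>
     S \<subseteq> residues_mod Q \<and>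
     1 mod Q \<in> S \<and>
     (\<forall>x\<in>S. \<forall>y\<in>S. x + y \<in> S) \<and>
     (\<forall>c. \<forall>x\<in>S. smult c x \<in> S) \<and>
     (\<forall>x\<in>S. \<forall>y\<in>S. (x * y) mod Q \<in> S)"

end

theory Submission
  imports Defs
begin

text \<open>If v is an element of square zero in k[T]/(Q), then the span of 1 and v is a subalgebra.
  For Q = P^n with n \<ge> 4 the elements v_c = P^(n-2) (1 + cP), c \<in> k, all square to zero,
  and the subalgebras they span together with 1 are pairwise distinct: 1 + cP is not of the form
  a + b (1 + dP) with a divisible by P unless c = d.\<close>

definition one_span :: "'a::field poly \<Rightarrow> 'a poly set" where
  "one_span v = {[:a:] + smult b v | a b. True}"

lemma degree_one_span_le:
  assumes "x \<in> one_span v"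
  shows "degree x \<le> degree v"
proof -
  obtain a b where "x = [:a:] + smult b v"
    using assms unfolding one_span_def by blast
  then show ?thesis
    by (metis degree_add_le degree_pCons_0 degree_smult_le zero_le)
qed

lemma one_span_add:
  "[:a:] + smult b v + ([:a':] + smult b' v) = [:a + a':] + smult (b + b') v"
proof -
  have "[:a + a':] = [:a:] + [:a':]"
    by simp
  then show ?thesis
    by (simp only: smult_add_left ac_simps)
qed

lemma one_span_mod_eq:
  assumes "degree v < degree Q" and "x \<in> one_span v"
  shows "x mod Q = x"
  using degree_one_span_le[OF assms(2)] assms(1) by (simp add: mod_poly_less)

lemma quot_subalgebra_one_span:
  assumes deg: "degree v < degree Q" and square_zero: "Q dvd v * v"
  shows "quot_subalgebra Q (one_span v)"
  unfolding quot_subalgebra_def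
proof (intro conjI ballI allI)
  show "one_span v \<subseteq> residues_mod Q"
    unfolding residues_mod_def using one_span_mod_eq[OF deg] by blast
  have "1 \<in> one_span v"
    unfolding one_span_def by (intro CollectI exI[of _ 1] exI[of _ 0]) (simp add: one_pCons)
  moreover have "1 mod Q = 1"
    using deg by (simp add: mod_poly_less)
  ultimately show "1 mod Q \<in> one_span v"
    by simp
next
  fix x y assume "x \<in> one_span v" "y \<in> one_span v"
  then obtain a b a' b' where "x = [:a:] + smult b v" "y = [:a':] + smult b' v"
    unfolding one_span_def by blast
  then show "x + y \<in> one_span v"
    unfolding one_span_def by (auto simp only: one_span_add)
next
  fix c x assume "x \<in> one_span v"
  then obtain a b where "x = [:a:] + smult b v"
    unfolding one_span_def by blast
  then have "smult c x = [:c * a:] + smult (c * b) v"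
    by (simp add: smult_add_right)
  then show "smult c x \<in> one_span v"
    unfolding one_span_def by blast
next
  fix x y assume x: "x \<in> one_span v" and y: "y \<in> one_span v"
  obtain a b a' b' where xy: "x = [:a:] + smult b v" "y = [:a':] + smult b' v"
    using x y unfolding one_span_def by blast
  obtain w where w: "v * v = Q * w"
    using square_zero by blast
  define u where "u = [:a * a':] + smult (a * b' + a' * b) v"
  have "x * y = u + smult (b * b') (v * v)"
    unfolding xy u_def by (simp add: algebra_simps smult_add_left smult_add_right)
  also have "\<dots> = u + smult (b * b') w * Q"
    by (simp add: w mult.commute)
  finally have "(x * y) mod Q = u mod Q"
    by (simp only: mod_mult_self1)
  moreover have "u \<in> one_span v"
    unfolding u_def one_span_def by blast
  ultimately show "(x * y) mod Q \<in> one_span v"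
    using one_span_mod_eq[OF deg] by simp
qed

lemma degree_power_mult_linear_less:
  fixes P :: "'a::field poly"
  assumes "degree P > 0" and "m + 1 < n"
  shows "degree (P ^ m * (1 + smult c P)) < degree (P ^ n)"
proof -
  have "degree (1 + smult c P) \<le> degree P"
    by (rule degree_add_le) (auto intro: degree_smult_le)
  then have "degree (P ^ m * (1 + smult c P)) \<le> (m + 1) * degree P"
    using degree_mult_le[of "P ^ m" "1 + smult c P"] degree_power_le[of P m]
    by (simp add: algebra_simps)
  also have "\<dots> < n * degree P"
    using assms by (intro mult_strict_right_mono) auto
  finally show ?thesis
    using assms(1) by (subst degree_power_eq) auto
qed

lemma power_dvd_square_power_mult:
  fixes p :: "'a::comm_semiring_1"
  assumes "n \<le> m + m"
  shows "p ^ n dvd (p ^ m * q) * (p ^ m * q)"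
proof -
  have "(p ^ m * q) * (p ^ m * q) = p ^ (m + m) * q ^ 2"
    by (simp add: power_add power2_eq_square mult_ac)
  then show ?thesis
    using le_imp_power_dvd[OF assms, of p] by (simp add: dvd_mult2)
qed

lemma inj_one_span_power_mult_linear:
  assumes "degree P > 0" and "m > 0"
  shows "inj (\<lambda>c. one_span (P ^ m * (1 + smult c P)))"
proof (rule injI)
  fix c d
  assume "one_span (P ^ m * (1 + smult c P)) = one_span (P ^ m * (1 + smult d P))"
  moreover have "P ^ m * (1 + smult c P) \<in> one_span (P ^ m * (1 + smult c P))"
    unfolding one_span_def by (intro CollectI exI[of _ 0] exI[of _ 1]) simp
  ultimately obtain a b where e: "P ^ m * (1 + smult c P) = [:a:] + smult b (P ^ m * (1 + smult d P))"
    unfolding one_span_def by blast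
  have a_eq: "[:a:] = P ^ m * ([:1 - b:] + smult (c - b * d) P)"
    using e by (simp add: algebra_simps smult_add_right smult_diff_left one_pCons)
  have "P dvd [:a:]"
    unfolding a_eq using \<open>m > 0\<close> by (simp add: dvd_power dvd_mult2)
  then have "a = 0"
    using assms(1) dvd_imp_degree_le[of P "[:a:]"] by fastforce
  then have "[:1 - b:] + smult (c - b * d) P = 0"
    using a_eq assms(1) by auto
  then have "[:1 - b:] = - smult (c - b * d) P"
    by (simp add: eq_neg_iff_add_eq_0)
  moreover have "c - b * d = 0"
    using calculation assms(1) by (metis degree_minus degree_pCons_0 degree_smult_eq less_irrefl)
  ultimately show "c = d"
    by simp
qed

theorem lemma3p5:
  fixes P :: "'a::field poly" and n :: nat
  assumes "infinite (UNIV :: 'a set)"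
    and "n \<ge> 4"
    and "degree P > 0"
  shows "infinite {S. quot_subalgebra (P ^ n) S}"
proof -
  define m where "m = n - 2"
  define v where "v c = P ^ m * (1 + smult c P)" for c
  have "degree (v c) < degree (P ^ n)" for c
    unfolding v_def m_def using assms(2,3) by (intro degree_power_mult_linear_less) auto
  moreover have "P ^ n dvd v c * v c" for c
    unfolding v_def m_def using assms(2) by (intro power_dvd_square_power_mult) auto
  ultimately have "range (one_span \<circ> v) \<subseteq> {S. quot_subalgebra (P ^ n) S}"
    by (auto intro: quot_subalgebra_one_span)
  moreover have "inj (one_span \<circ> v)"
    using inj_one_span_power_mult_linear[OF assms(3)] assms(2)
    by (simp add: v_def m_def comp_def)
  then have "infinite (range (one_span \<circ> v))"
    using assms(1) finite_imageD by blast
  ultimately show ?thesis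
    using finite_subset by blast
qed

end
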